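(* Let $G$ be a connected weighted multigraph on the vertex set $V$, $|V|=n\ge2$, with positive edge weights, weighted adjacency matrix $A$ and spectral radius $\rho$. Then the long walk distance $d^{LW}(i,j)=\lim_{\alpha\to\infty}d^{W}_\alpha(i,j)$ is a metric on $V$.
   Context: $A=(a_{ij})$ has $a_{ij}$ equal to the sum of weights of the edges joining $i$ and $j$ (loops, multiple edges allowed). For $\alpha>0$, $t=(\rho+\alpha^{-1})^{-1}$, $R_t=(I-tA)^{-1}=(r_{ij}(t))$, and $d^{W}_\alpha(i,j)=\theta\bigl(\tfrac12(\ln r_{ii}(t)+\ln r_{jj}(t))-\ln r_{ij}(t)\bigr)$ with $\theta=\ln(e+\alpha^{2/n})\frac{\alpha-1}{\ln\alpha}$ ($\theta=\ln(e+1)$ at $\alpha=1$); the limit defining $d^{LW}$ exists for all $i,j$. *)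

theory Defs
  imports Complex_Main "Jordan_Normal_Form.Spectral_Radius" "Jordan_Normal_Form.Gauss_Jordan_Elimination"
begin

text \<open>Vertices are 0,...,n-1; A is the n x n weighted adjacency matrix
  (a_ij = sum of weights of edges joining i and j, loops and multi-edges allowed).\<close>

definition weighted_adjacency :: "nat \<Rightarrow> real mat \<Rightarrow> bool" where
  "weighted_adjacency n A \<longleftrightarrow> A \<in> carrier_mat n n \<and>
     (\<forall>i<n. \<forall>j<n. A $$ (i,j) \<ge> 0 \<and> A $$ (i,j) = A $$ (j,i))"

definition connected_graph :: "nat \<Rightarrow> real mat \<Rightarrow> bool" where
  "connected_graph n A \<longleftrightarrow>
     (\<forall>i<n. \<forall>j<n. (i,j) \<in> {(k,l). k < n \<and> l < n \<and> A $$ (k,l) > 0}\<^sup>*)"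

definition spec_rad :: "real mat \<Rightarrow> real" where
  "spec_rad A = spectral_radius (map_mat complex_of_real A)"

definition walk_theta :: "nat \<Rightarrow> real \<Rightarrow> real" where
  "walk_theta n \<alpha> = (if \<alpha> = 1 then ln (exp 1 + 1)
      else ln (exp 1 + \<alpha> powr (2 / real n)) * (\<alpha> - 1) / ln \<alpha>)"

definition walk_resolvent :: "real mat \<Rightarrow> real \<Rightarrow> real mat" where
  "walk_resolvent A \<alpha> =
     (let n = dim_row A; t = inverse (spec_rad A + inverse \<alpha>)
      in the (mat_inverse (1\<^sub>m n - t \<cdot>\<^sub>m A)))"

definition walk_dist :: "real mat \<Rightarrow> real \<Rightarrow> nat \<Rightarrow> nat \<Rightarrow> real" where
  "walk_dist A \<alpha> i j =
     (let R = walk_resolvent A \<alpha>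
      in walk_theta (dim_row A) \<alpha> *
           ((ln (R $$ (i,i)) + ln (R $$ (j,j))) / 2 - ln (R $$ (i,j))))"

definition metric_on :: "nat set \<Rightarrow> (nat \<Rightarrow> nat \<Rightarrow> real) \<Rightarrow> bool" where
  "metric_on V d \<longleftrightarrow>
     (\<forall>i\<in>V. d i i = 0) \<and>
     (\<forall>i\<in>V. \<forall>j\<in>V. i \<noteq> j \<longrightarrow> d i j > 0) \<and>
     (\<forall>i\<in>V. \<forall>j\<in>V. d i j = d j i) \<and>
     (\<forall>i\<in>V. \<forall>j\<in>V. \<forall>k\<in>V. d i k \<le> d i j + d j k)"

end

theory Submission
  imports Defs "HOL-Analysis.Function_Topology"
begin

text \<open>Let u > 0 be the Perron vector of A with eigenvalue \<rho>. Removing the Perron direction, the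
  matrix X_t = (I - t (A - \<rho> u u^T))^-1 stays regular at t = 1/\<rho>, and the walk resolvent is
  R_t = X_t + \<alpha> \<rho> u u^T. As \<theta> grows like (2/n) \<alpha>, a first-order expansion of the logarithms
  gives d^LW(i,j) = (G i i + G j j - 2 G i j) / (n \<rho>) with G i j = X i j / (u i u j), X = X_(1/\<rho>).
  The function m \<mapsto> G m p - G m q is harmonic off p and q for the random walk with transition
  weights a l m u m, so by the maximum principle it is largest at m = p; this gives both positivity and
  the triangle inequality.\<close>

lemma index_mult_mat_sum:
  fixes M N :: "'a::comm_semiring_0 mat"
  assumes "M \<in> carrier_mat m k" "N \<in> carrier_mat k l" "i < m" "j < l"
  shows "(M * N) $$ (i, j) = (\<Sum>r<k. M $$ (i, r) * N $$ (r, j))"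
  using assms by (auto simp: scalar_prod_def atLeast0LessThan intro!: sum.cong)

lemma index_mult_mat_vec_sum:
  fixes M :: "'a::comm_semiring_0 mat"
  assumes "M \<in> carrier_mat m k" "v \<in> carrier_vec k" "i < m"
  shows "(M *\<^sub>v v) $ i = (\<Sum>r<k. M $$ (i, r) * v $ r)"
  using assms by (auto simp: scalar_prod_def atLeast0LessThan intro!: sum.cong)

lemma sum_delta_mult:
  fixes x :: "nat \<Rightarrow> 'a::semiring_1"
  shows "i < n \<Longrightarrow> (\<Sum>k<n. (if i = k then 1 else 0) * x k) = x i"
  by (simp add: if_distrib[of "\<lambda>c. c * _"] cong: if_cong)

lemma mat_inverse_eq_SomeI:
  fixes M B :: "'a::field mat"
  assumes M: "M \<in> carrier_mat n n" and B: "B \<in> carrier_mat n n" and MB: "M * B = 1\<^sub>m n"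
  shows "mat_inverse M = Some B"
proof (cases "mat_inverse M")
  case None
  have "B * M = 1\<^sub>m n" by (rule mat_mult_left_right_inverse[OF M B MB])
  hence "M \<in> Units (ring_mat TYPE('a) n ())"
    using M B MB unfolding Units_def by (auto simp: ring_mat_simps)
  with mat_inverse(1)[OF M None, of "()"] show ?thesis by blast
next
  case (Some C)
  with mat_inverse(2)[OF M] have CM: "C * M = 1\<^sub>m n" and C: "C \<in> carrier_mat n n" by auto
  have "C = C * (M * B)" using C MB by simp
  also have "\<dots> = (C * M) * B" using C M B by (simp add: assoc_mult_mat)
  finally show ?thesis using Some CM B by simp
qed

lemma transpose_right_inverse_of_symmetric:
  fixes M X :: "'a::comm_semiring_1 mat"
  assumes M: "M \<in> carrier_mat n n" and X: "X \<in> carrier_mat n n"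
    and sym: "transpose_mat M = M" and MX: "M * X = 1\<^sub>m n"
  shows "transpose_mat X = X"
proof -
  have XM: "transpose_mat X * M = 1\<^sub>m n"
    using arg_cong[OF MX, of transpose_mat] transpose_mult[OF M X] sym by simp
  have "transpose_mat X = transpose_mat X * (M * X)" using X MX by simp
  also have "\<dots> = (transpose_mat X * M) * X" using M X by (simp add: assoc_mult_mat)
  finally show ?thesis using XM X by simp
qed

lemma tendsto_det:
  fixes M :: "'b \<Rightarrow> 'a::real_normed_field mat"
  assumes "\<And>x. M x \<in> carrier_mat m m" "M0 \<in> carrier_mat m m"
    and "\<And>i j. i < m \<Longrightarrow> j < m \<Longrightarrow> ((\<lambda>x. M x $$ (i, j)) \<longlongrightarrow> M0 $$ (i, j)) F"
  shows "((\<lambda>x. det (M x)) \<longlongrightarrow> det M0) F"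
  unfolding det_def'[OF assms(1)] det_def'[OF assms(2)]
proof (intro tendsto_sum tendsto_mult tendsto_const tendsto_prod)
  fix p i assume "p \<in> {p. p permutes {0..<m}}" "i \<in> {0..<m}"
  hence "i < m" "p i < m" using permutes_in_image by fastforce+
  thus "((\<lambda>x. M x $$ (i, p i)) \<longlongrightarrow> M0 $$ (i, p i)) F" by (rule assms(3))
qed

lemma tendsto_cofactor:
  fixes M :: "'b \<Rightarrow> 'a::real_normed_field mat"
  assumes M: "\<And>x. M x \<in> carrier_mat m m" and M0: "M0 \<in> carrier_mat m m"
    and lim: "\<And>i j. i < m \<Longrightarrow> j < m \<Longrightarrow> ((\<lambda>x. M x $$ (i, j)) \<longlongrightarrow> M0 $$ (i, j)) F"
  shows "((\<lambda>x. cofactor (M x) i j) \<longlongrightarrow> cofactor M0 i j) F"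
  unfolding cofactor_def
proof (intro tendsto_mult_left tendsto_det)
  show "\<And>x. mat_delete (M x) i j \<in> carrier_mat (m - 1) (m - 1)"
    using M by (rule mat_delete_carrier)
  show "mat_delete M0 i j \<in> carrier_mat (m - 1) (m - 1)"
    using M0 by (rule mat_delete_carrier)
  fix k l assume "k < m - 1" "l < m - 1"
  thus "((\<lambda>x. mat_delete (M x) i j $$ (k, l)) \<longlongrightarrow> mat_delete M0 i j $$ (k, l)) F"
    using carrier_matD[OF M] carrier_matD[OF M0] by (auto simp: mat_delete_def intro!: lim)
qed

lemma quadratic_nonneg_imp_linear_zero:
  fixes L c :: real
  assumes "\<And>e. 2 * e * L \<le> e\<^sup>2 * c"
  shows "L = 0"
proof (rule ccontr)
  assume "L \<noteq> 0"
  define k where "k = \<bar>c\<bar> + 1"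
  have k: "k > 0" "c < k" unfolding k_def by auto
  have "2 * (L / k) * L \<le> (L / k)\<^sup>2 * c" by (rule assms)
  hence "2 * k * L\<^sup>2 \<le> c * L\<^sup>2" using k by (simp add: field_simps power2_eq_square)
  moreover have "L\<^sup>2 > 0" using \<open>L \<noteq> 0\<close> by simp
  ultimately have "2 * k \<le> c" by simp
  thus False using k by simp
qed

lemma eventually_pos_filterlim_at_top:
  fixes s :: "'b \<Rightarrow> real"
  shows "filterlim s at_top F \<Longrightarrow> \<forall>\<^sub>F x in F. s x > 0"
  unfolding filterlim_at_top_dense by blast

lemma tendsto_mult_ln_one_plus_divide:
  fixes h s :: "'b \<Rightarrow> real"
  assumes h: "(h \<longlongrightarrow> c) F" and s: "filterlim s at_top F"
  shows "((\<lambda>x. s x * ln (1 + h x / s x)) \<longlongrightarrow> c) F"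
proof -
  have err: "((\<lambda>x. (h x)\<^sup>2 / s x) \<longlongrightarrow> 0) F"
    using real_tendsto_divide_at_top[OF tendsto_power[OF h] s] .
  have small: "\<forall>\<^sub>F x in F. \<bar>h x / s x\<bar> < 1 / 2"
    using order_tendstoD(2)[OF tendsto_rabs[OF real_tendsto_divide_at_top[OF h s]], of "1/2"] by simp
  have "\<forall>\<^sub>F x in F. norm (s x * ln (1 + h x / s x) - h x) \<le> norm ((h x)\<^sup>2 / s x) * 2"
    using small eventually_pos_filterlim_at_top[OF s]
  proof eventually_elim
    case (elim x)
    have "\<bar>ln (1 + h x / s x) - h x / s x\<bar> \<le> 2 * (h x / s x)\<^sup>2"
      using elim by (intro abs_ln_one_plus_x_minus_x_bound) auto
    hence "s x * \<bar>ln (1 + h x / s x) - h x / s x\<bar> \<le> s x * (2 * (h x / s x)\<^sup>2)"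
      using elim by (intro mult_left_mono) auto
    thus ?case using elim by (simp add: abs_mult right_diff_distrib power2_eq_square field_simps)
  qed
  hence "((\<lambda>x. s x * ln (1 + h x / s x) - h x) \<longlongrightarrow> 0) F"
    by (rule tendsto_0_le[OF err])
  from tendsto_add[OF this h] show ?thesis by simp
qed

lemma tendsto_mult_ln_excess:
  fixes g s :: "'b \<Rightarrow> real"
  assumes P: "P > 0" and g: "(g \<longlongrightarrow> c) F" and s: "filterlim s at_top F"
  shows "((\<lambda>x. s x * (ln (s x * P + g x) - ln (s x) - ln P)) \<longlongrightarrow> c / P) F"
proof -
  have g': "((\<lambda>x. g x / P) \<longlongrightarrow> c / P) F" using g P by (intro tendsto_divide tendsto_const) auto
  have "\<forall>\<^sub>F x in F. g x / P / s x > -1"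
    using order_tendstoD(1)[OF real_tendsto_divide_at_top[OF g' s], of "-1"] by simp
  hence "\<forall>\<^sub>F x in F. s x * ln (1 + g x / P / s x) = s x * (ln (s x * P + g x) - ln (s x) - ln P)"
    using eventually_pos_filterlim_at_top[OF s]
  proof eventually_elim
    case (elim x)
    have "s x * P + g x = s x * P * (1 + g x / P / s x)" using elim P by (simp add: field_simps)
    hence "ln (s x * P + g x) = ln (s x) + ln P + ln (1 + g x / P / s x)"
      using elim P by (simp add: ln_mult pos_add_strict)
    thus ?case by simp
  qed
  with tendsto_mult_ln_one_plus_divide[OF g' s] show ?thesis
    by (rule Lim_transform_eventually)
qed

lemma tendsto_ln_exp_plus_powr_over_ln:
  fixes c :: real
  assumes c: "c > 0"
  shows "((\<lambda>x. ln (exp 1 + x powr c) / ln x) \<longlongrightarrow> c) at_top"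
proof -
  have "((\<lambda>x. c + ln (1 + exp 1 * x powr (-c)) / ln x) \<longlongrightarrow> c + 0) at_top"
  proof (intro tendsto_add tendsto_const real_tendsto_divide_at_top ln_at_top)
    have "((\<lambda>x::real. x powr (-c)) \<longlongrightarrow> 0) at_top"
      using c by (intro tendsto_neg_powr filterlim_ident) auto
    thus "((\<lambda>x. ln (1 + exp 1 * x powr (-c))) \<longlongrightarrow> ln (1 + exp 1 * 0)) at_top"
      by (intro tendsto_ln tendsto_add tendsto_mult tendsto_const) auto
  qed
  moreover have "\<forall>\<^sub>F x in at_top. c + ln (1 + exp 1 * x powr (-c)) / ln x = ln (exp 1 + x powr c) / ln x"
    using eventually_gt_at_top[of 1]
  proof eventually_elim
    case (elim x)
    have "exp 1 + x powr c = x powr c * (1 + exp 1 * x powr (-c))"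
      using elim by (simp add: powr_minus field_simps)
    moreover have "1 + exp 1 * x powr (-c) > 0" using elim by (intro add_pos_pos mult_pos_pos) auto
    ultimately have "ln (exp 1 + x powr c) = c * ln x + ln (1 + exp 1 * x powr (-c))"
      using elim by (simp add: ln_mult ln_powr)
    thus ?case using elim by (simp add: field_simps)
  qed
  ultimately show ?thesis by (simp add: Lim_transform_eventually)
qed

lemma tendsto_walk_theta_over_linear:
  assumes m: "m > 0" and k: "k > 0"
  shows "((\<lambda>x. walk_theta k x / (x * m)) \<longlongrightarrow> 2 / (real k * m)) at_top"
proof -
  have "((\<lambda>x. ln (exp 1 + x powr (2 / real k)) / ln x * (1 - 1 / x) / m)
          \<longlongrightarrow> 2 / real k * (1 - 0) / m) at_top"
    using k by (intro tendsto_mult tendsto_divide tendsto_diff tendsto_const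
        tendsto_ln_exp_plus_powr_over_ln real_tendsto_divide_at_top[OF _ filterlim_ident]) (use m in auto)
  moreover have "\<forall>\<^sub>F x in at_top. ln (exp 1 + x powr (2 / real k)) / ln x * (1 - 1 / x) / m
      = walk_theta k x / (x * m)"
    using eventually_gt_at_top[of 1] by eventually_elim (simp add: walk_theta_def field_simps)
  ultimately show ?thesis using m by (simp add: Lim_transform_eventually)
qed

text \<open>With s = x m, each logarithm is ln s + ln P + (c/P)/s + o(1/s); the ln s and ln P terms
  cancel in the defect, and the prefactor grows like (2/k) x.\<close>
lemma tendsto_walk_theta_ln_defect:
  fixes g1 g2 g3 :: "real \<Rightarrow> real"
  assumes m: "m > 0" and k: "k > 0" and p: "p > 0" and q: "q > 0"
    and g1: "(g1 \<longlongrightarrow> c1) at_top" and g2: "(g2 \<longlongrightarrow> c2) at_top" and g3: "(g3 \<longlongrightarrow> c3) at_top"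
  shows "((\<lambda>x. walk_theta k x * ((ln (x * m * p\<^sup>2 + g1 x) + ln (x * m * q\<^sup>2 + g2 x)) / 2
              - ln (x * m * (p * q) + g3 x)))
          \<longlongrightarrow> 2 / (real k * m) * ((c1 / p\<^sup>2 + c2 / q\<^sup>2) / 2 - c3 / (p * q))) at_top"
proof -
  define s :: "real \<Rightarrow> real" where "s x = x * m" for x
  define E where "E P g x = s x * (ln (s x * P + g x) - ln (s x) - ln P)" for P g x
  have s: "filterlim s at_top at_top"
    unfolding s_def by (rule filterlim_at_top_mult_tendsto_pos[OF tendsto_const m filterlim_ident])
  have E: "((\<lambda>x. E P g x) \<longlongrightarrow> c / P) at_top" if "P > 0" "(g \<longlongrightarrow> c) at_top" for P g c
    unfolding E_def using that s by (rule tendsto_mult_ln_excess)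
  have "((\<lambda>x. walk_theta k x / s x * ((E (p\<^sup>2) g1 x + E (q\<^sup>2) g2 x) / 2 - E (p * q) g3 x))
          \<longlongrightarrow> 2 / (real k * m) * ((c1 / p\<^sup>2 + c2 / q\<^sup>2) / 2 - c3 / (p * q))) at_top"
    using p q unfolding s_def
    by (intro tendsto_mult tendsto_walk_theta_over_linear[OF m k] tendsto_diff tendsto_divide
        tendsto_add tendsto_const E g1 g2 g3) auto
  moreover have "\<forall>\<^sub>F x in at_top.
      walk_theta k x / s x * ((E (p\<^sup>2) g1 x + E (q\<^sup>2) g2 x) / 2 - E (p * q) g3 x)
      = walk_theta k x * ((ln (x * m * p\<^sup>2 + g1 x) + ln (x * m * q\<^sup>2 + g2 x)) / 2
          - ln (x * m * (p * q) + g3 x))"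
    using eventually_pos_filterlim_at_top[OF s]
  proof eventually_elim
    case (elim x)
    have ln_pq: "ln (p\<^sup>2) + ln (q\<^sup>2) = 2 * ln (p * q)" using p q by (simp add: ln_mult power2_eq_square)
    have regroup: "t / s' * ((s' * (L1 - l - a) + s' * (L2 - l - b)) / 2 - s' * (L3 - l - c))
        = t * ((L1 + L2) / 2 - L3)" if "s' \<noteq> 0" "a + b = 2 * c" for t s' L1 L2 L3 l a b c :: real
    proof -
      have "t / s' * ((s' * (L1 - l - a) + s' * (L2 - l - b)) / 2 - s' * (L3 - l - c))
          = t * ((L1 - l - a + (L2 - l - b)) / 2 - (L3 - l - c))"
        using that(1) by (simp add: field_simps)
      moreover have "(L1 - l - a + (L2 - l - b)) / 2 - (L3 - l - c) = (L1 + L2) / 2 - L3"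
        using that(2) by (simp add: field_simps)
      ultimately show ?thesis by simp
    qed
    show ?case unfolding E_def s_def by (rule regroup) (use elim ln_pq in \<open>auto simp: s_def\<close>)
  qed
  ultimately show ?thesis by (rule Lim_transform_eventually)
qed

section \<open>The Perron vector\<close>

locale connected_weighted_graph =
  fixes n :: nat and A :: "real mat"
  assumes two_le_n: "2 \<le> n"
    and adjacency: "weighted_adjacency n A"
    and connected: "connected_graph n A"
begin

abbreviation a :: "nat \<Rightarrow> nat \<Rightarrow> real" where "a i j \<equiv> A $$ (i, j)"

lemma A_carrier: "A \<in> carrier_mat n n"
  using adjacency unfolding weighted_adjacency_def by auto

lemma a_nonneg: "i < n \<Longrightarrow> j < n \<Longrightarrow> a i j \<ge> 0"
  using adjacency unfolding weighted_adjacency_def by auto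

lemma a_sym: "i < n \<Longrightarrow> j < n \<Longrightarrow> a i j = a j i"
  using adjacency unfolding weighted_adjacency_def by auto

definition edges :: "(nat \<times> nat) set" where
  "edges = {(k, l). k < n \<and> l < n \<and> a k l > 0}"

lemma in_rtrancl_edges: "i < n \<Longrightarrow> j < n \<Longrightarrow> (i, j) \<in> edges\<^sup>*"
  using connected unfolding connected_graph_def edges_def by auto

definition quad_form :: "(nat \<Rightarrow> real) \<Rightarrow> real" where
  "quad_form x = (\<Sum>i<n. \<Sum>j<n. a i j * x i * x j)"

text \<open>Vectors are functions vanishing from n on, so that the unit sphere is compact in the
  product topology.\<close>
definition unit_sphere :: "(nat \<Rightarrow> real) set" where
  "unit_sphere = {x. (\<forall>i\<ge>n. x i = 0) \<and> (\<Sum>i<n. (x i)\<^sup>2) = 1}"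

lemma continuous_on_coordinate: "continuous_on S (\<lambda>x::nat \<Rightarrow> real. x i)"
  by (rule continuous_on_subset[OF continuous_on_product_coordinates]) auto

lemma compact_unit_sphere: "compact unit_sphere"
proof -
  define K where "K = PiE UNIV (\<lambda>i. if i < n then {-1..1} else {0::real})"
  have "compactin (product_topology (\<lambda>i. euclidean) UNIV) K"
    unfolding K_def compactin_PiE by (auto simp: compactin_euclidean_iff)
  hence "compact K" by (simp add: euclidean_product_topology compactin_euclidean_iff)
  moreover have "closed {x::nat \<Rightarrow> real. (\<Sum>i<n. (x i)\<^sup>2) = 1}"
    by (rule closed_Collect_eq) (intro continuous_intros continuous_on_coordinate)+
  moreover have "unit_sphere = K \<inter> {x. (\<Sum>i<n. (x i)\<^sup>2) = 1}"
  proof (intro equalityI subsetI)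
    fix x assume x: "x \<in> unit_sphere"
    have "(x i)\<^sup>2 \<le> 1" if "i < n" for i
      using x member_le_sum[of i "{..<n}" "\<lambda>i. (x i)\<^sup>2"] that unfolding unit_sphere_def by auto
    thus "x \<in> K \<inter> {x. (\<Sum>i<n. (x i)\<^sup>2) = 1}"
      using x unfolding unit_sphere_def K_def by (auto simp: PiE_iff abs_square_le_1 abs_le_iff)
  next
    fix x assume "x \<in> K \<inter> {x. (\<Sum>i<n. (x i)\<^sup>2) = 1}"
    thus "x \<in> unit_sphere" unfolding unit_sphere_def K_def by (auto simp: PiE_iff) (metis not_le singletonD)
  qed
  ultimately show ?thesis by (simp add: compact_Int_closed)
qed

lemma unit_sphere_nonempty: "unit_sphere \<noteq> {}"
proof -
  have "(\<lambda>i. if i = 0 then 1 else 0::real) \<in> unit_sphere"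
    using two_le_n by (simp add: unit_sphere_def if_distrib[of power2] cong: if_cong)
  thus ?thesis by blast
qed

lemma quad_form_le_abs: "quad_form x \<le> quad_form (\<lambda>i. \<bar>x i\<bar>)"
  unfolding quad_form_def
proof (intro sum_mono)
  fix i j assume "i \<in> {..<n}" "j \<in> {..<n}"
  hence "a i j * (x i * x j) \<le> a i j * (\<bar>x i\<bar> * \<bar>x j\<bar>)"
    using a_nonneg by (intro mult_left_mono) (auto simp: abs_mult[symmetric])
  thus "a i j * x i * x j \<le> a i j * \<bar>x i\<bar> * \<bar>x j\<bar>" by (simp add: mult.assoc)
qed

lemma ex_nonneg_maximizer:
  "\<exists>x. x \<in> unit_sphere \<and> (\<forall>i. x i \<ge> 0) \<and> (\<forall>y\<in>unit_sphere. quad_form y \<le> quad_form x)"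
proof -
  have "continuous_on unit_sphere quad_form"
    unfolding quad_form_def by (intro continuous_intros continuous_on_coordinate)
  then obtain x where x: "x \<in> unit_sphere" "\<forall>y\<in>unit_sphere. quad_form y \<le> quad_form x"
    using continuous_attains_sup[OF compact_unit_sphere unit_sphere_nonempty] by blast
  have "(\<lambda>i. \<bar>x i\<bar>) \<in> unit_sphere" using x(1) unfolding unit_sphere_def by auto
  with x(2) quad_form_le_abs[of x] show ?thesis by (intro exI[of _ "\<lambda>i. \<bar>x i\<bar>"]) force
qed

definition perron_vector :: "nat \<Rightarrow> real" where
  "perron_vector = (SOME x. x \<in> unit_sphere \<and> (\<forall>i. x i \<ge> 0) \<and> (\<forall>y\<in>unit_sphere. quad_form y \<le> quad_form x))"

definition perron_root :: real where
  "perron_root = quad_form perron_vector"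

abbreviation u :: "nat \<Rightarrow> real" where "u \<equiv> perron_vector"
abbreviation \<rho> :: real where "\<rho> \<equiv> perron_root"

lemma perron_vector:
  shows perron_vector_in_unit_sphere: "u \<in> unit_sphere"
    and perron_vector_nonneg: "u i \<ge> 0"
    and quad_form_le_perron_root: "y \<in> unit_sphere \<Longrightarrow> quad_form y \<le> \<rho>"
  using someI_ex[OF ex_nonneg_maximizer] unfolding perron_vector_def[symmetric] perron_root_def
  by auto

lemma sum_perron_vector_square: "(\<Sum>i<n. (u i)\<^sup>2) = 1"
  using perron_vector_in_unit_sphere unfolding unit_sphere_def by auto

lemma quad_form_le: "quad_form x \<le> \<rho> * (\<Sum>i<n. (x i)\<^sup>2)"
proof (cases "(\<Sum>i<n. (x i)\<^sup>2) = 0")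
  case True
  hence "\<forall>i\<in>{..<n}. x i = 0" by (simp add: sum_nonneg_eq_0_iff)
  thus ?thesis by (simp add: quad_form_def)
next
  case False
  define r where "r = sqrt (\<Sum>i<n. (x i)\<^sup>2)"
  have r: "r > 0" "r\<^sup>2 = (\<Sum>i<n. (x i)\<^sup>2)"
    using False sum_nonneg[of "{..<n}" "\<lambda>i. (x i)\<^sup>2"] unfolding r_def by auto
  define y where "y i = (if i < n then x i / r else 0)" for i
  have "(\<Sum>i<n. (y i)\<^sup>2) = (\<Sum>i<n. (x i)\<^sup>2) / r\<^sup>2"
    by (simp add: y_def power_divide sum_divide_distrib)
  hence "y \<in> unit_sphere" using r unfolding unit_sphere_def y_def by auto
  hence "quad_form y \<le> \<rho>" by (rule quad_form_le_perron_root)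
  moreover have "quad_form y = quad_form x / r\<^sup>2"
    unfolding quad_form_def y_def sum_divide_distrib by (intro sum.cong refl) (simp add: power2_eq_square)
  ultimately show ?thesis using r(2) zero_less_power[OF r(1), of 2] by (simp add: pos_divide_le_eq mult.commute)
qed
definition rayleigh_gap :: "(nat \<Rightarrow> real) \<Rightarrow> real" where
  "rayleigh_gap x = \<rho> * (\<Sum>i<n. (x i)\<^sup>2) - quad_form x"

definition residual :: "(nat \<Rightarrow> real) \<Rightarrow> nat \<Rightarrow> real" where
  "residual x i = \<rho> * x i - (\<Sum>j<n. a i j * x j)"

lemma rayleigh_gap_nonneg: "rayleigh_gap x \<ge> 0"
  using quad_form_le[of x] by (simp add: rayleigh_gap_def)

lemma rayleigh_gap_diff:
  "rayleigh_gap (\<lambda>i. x i - e * w i)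
     = rayleigh_gap x - 2 * e * (\<Sum>i<n. w i * residual x i) + e\<^sup>2 * rayleigh_gap w"
proof -
  have swap: "(\<Sum>i<n. \<Sum>j<n. a i j * x i * w j) = (\<Sum>i<n. \<Sum>j<n. a i j * w i * x j)"
    by (subst sum.swap) (intro sum.cong refl, simp add: a_sym mult_ac)
  have quad: "quad_form (\<lambda>i. x i - e * w i)
      = quad_form x - e * (\<Sum>i<n. \<Sum>j<n. a i j * x i * w j) - e * (\<Sum>i<n. \<Sum>j<n. a i j * w i * x j)
        + e\<^sup>2 * quad_form w"
    unfolding quad_form_def
    by (simp add: algebra_simps sum.distrib sum_subtractf sum_distrib_left power2_eq_square)
  have res: "(\<Sum>i<n. w i * residual x i)
      = \<rho> * (\<Sum>i<n. x i * w i) - (\<Sum>i<n. \<Sum>j<n. a i j * w i * x j)"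
    by (simp add: residual_def algebra_simps sum_subtractf sum_distrib_left)
  have sq: "(\<Sum>i<n. (x i - e * w i)\<^sup>2)
      = (\<Sum>i<n. (x i)\<^sup>2) - 2 * e * (\<Sum>i<n. x i * w i) + e\<^sup>2 * (\<Sum>i<n. (w i)\<^sup>2)"
    by (simp add: algebra_simps sum.distrib sum_subtractf sum_distrib_left power2_eq_square)
  show ?thesis unfolding rayleigh_gap_def quad res sq swap by (simp add: algebra_simps)
qed

text \<open>The Perron vector is a zero of the nonnegative Rayleigh gap, so the gap's derivative in the
  direction of the residual, minus twice the squared norm of the residual, vanishes.\<close>
lemma perron_eigen: "i < n \<Longrightarrow> (\<Sum>j<n. a i j * u j) = \<rho> * u i"
proof -
  assume i: "i < n"
  have gap: "rayleigh_gap u = 0"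
    unfolding rayleigh_gap_def perron_root_def sum_perron_vector_square by simp
  have "(\<Sum>k<n. residual u k * residual u k) = 0"
  proof (rule quadratic_nonneg_imp_linear_zero)
    fix e
    show "2 * e * (\<Sum>k<n. residual u k * residual u k) \<le> e\<^sup>2 * rayleigh_gap (residual u)"
      using rayleigh_gap_nonneg[of "\<lambda>k. u k - e * residual u k"]
      unfolding rayleigh_gap_diff gap by simp
  qed
  hence "residual u i = 0" using i by (simp add: sum_nonneg_eq_0_iff)
  thus ?thesis by (simp add: residual_def)
qed

lemma perron_eigen_left: "j < n \<Longrightarrow> (\<Sum>i<n. u i * a i j) = \<rho> * u j"
  using perron_eigen[of j] by (simp add: a_sym mult.commute)

lemma sum_perron_mult_adjacency:
  "(\<Sum>i<n. u i * (\<Sum>j<n. a i j * f j)) = \<rho> * (\<Sum>j<n. u j * f j)"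
proof -
  have "(\<Sum>i<n. u i * (\<Sum>j<n. a i j * f j)) = (\<Sum>i<n. \<Sum>j<n. u i * a i j * f j)"
    by (simp add: sum_distrib_left mult.assoc)
  also have "\<dots> = (\<Sum>j<n. \<Sum>i<n. u i * a i j * f j)" by (rule sum.swap)
  also have "\<dots> = (\<Sum>j<n. (\<Sum>i<n. u i * a i j) * f j)" by (simp add: sum_distrib_right)
  also have "\<dots> = \<rho> * (\<Sum>j<n. u j * f j)"
    by (simp add: perron_eigen_left sum_distrib_left mult_ac)
  finally show ?thesis .
qed

lemma perron_root_pos: "\<rho> > 0"
proof -
  have "(0, 1) \<in> edges\<^sup>*" using two_le_n by (intro in_rtrancl_edges) auto
  then obtain k l where "(k, l) \<in> edges" by (metis converse_rtranclE zero_neq_one)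
  hence kl: "k < n" "l < n" "a k l > 0" unfolding edges_def by auto
  define x where "x i = (if i = k \<or> i = l then 1 else 0::real)" for i
  have "a k l * x k * x l \<le> (\<Sum>j<n. a k j * x k * x j)"
    using kl a_nonneg by (intro member_le_sum) (auto simp: x_def)
  also have "\<dots> \<le> quad_form x"
    unfolding quad_form_def using kl a_nonneg by (intro member_le_sum sum_nonneg) (auto simp: x_def)
  finally have "0 < \<rho> * (\<Sum>i<n. (x i)\<^sup>2)" using kl quad_form_le[of x] by (simp add: x_def)
  thus ?thesis using sum_nonneg[of "{..<n}" "\<lambda>i. (x i)\<^sup>2"] by (auto simp: zero_less_mult_iff)
qed

lemma nonneg_eigenvector_zero_propagation:
  assumes nonneg: "\<And>i. i < n \<Longrightarrow> y i \<ge> 0"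
    and eigen: "\<And>i. i < n \<Longrightarrow> (\<Sum>j<n. a i j * y j) = \<rho> * y i"
    and "k < n" "y k = 0" "l < n"
  shows "y l = 0"
proof -
  have "(k, l) \<in> edges\<^sup>*" using assms by (intro in_rtrancl_edges)
  thus ?thesis
  proof (induction rule: rtrancl_induct)
    case base thus ?case using assms by simp
  next
    case (step m p)
    hence mp: "m < n" "p < n" "a m p > 0" unfolding edges_def by auto
    have "(\<Sum>j<n. a m j * y j) = 0" using eigen[OF mp(1)] step.IH by simp
    hence "\<forall>j\<in>{..<n}. a m j * y j = 0"
      using nonneg a_nonneg mp by (subst (asm) sum_nonneg_eq_0_iff) auto
    hence "a m p * y p = 0" using mp(2) by blast
    thus ?case using mp(3) by simp
  qed
qed

lemma perron_vector_pos: "i < n \<Longrightarrow> u i > 0"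
proof (rule ccontr)
  assume i: "i < n" "\<not> u i > 0"
  hence "u i = 0" using perron_vector_nonneg[of i] by simp
  hence "\<forall>l<n. u l = 0"
    using nonneg_eigenvector_zero_propagation[of u i] i perron_vector_nonneg perron_eigen by blast
  thus False using sum_perron_vector_square by simp
qed

text \<open>The Perron root is simple: subtracting the eigenvector from the largest multiple of u
  below it leaves a nonnegative eigenvector with a zero coordinate.\<close>
lemma perron_eigenvector_multiple:
  assumes eigen: "\<And>i. i < n \<Longrightarrow> (\<Sum>j<n. a i j * x j) = \<rho> * x i"
  shows "\<exists>c. \<forall>i<n. x i = c * u i"
proof -
  define c where "c = Max ((\<lambda>i. x i / u i) ` {..<n})"
  have fin: "finite ((\<lambda>i. x i / u i) ` {..<n})" "(\<lambda>i. x i / u i) ` {..<n} \<noteq> {}"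
    using two_le_n by (auto simp: lessThan_empty_iff)
  obtain k where k: "k < n" "c = x k / u k" using Max_in[OF fin] unfolding c_def by auto
  define y where "y i = c * u i - x i" for i
  have le_c: "x i / u i \<le> c" if "i < n" for i
    unfolding c_def using fin that by (intro Max_ge) auto
  have "y i \<ge> 0" if "i < n" for i
    using le_c[OF that] perron_vector_pos[OF that] by (simp add: y_def pos_divide_le_eq)
  moreover have "(\<Sum>j<n. a i j * y j) = \<rho> * y i" if "i < n" for i
  proof -
    have "(\<Sum>j<n. a i j * y j) = c * (\<Sum>j<n. a i j * u j) - (\<Sum>j<n. a i j * x j)"
      by (simp add: y_def right_diff_distrib sum_subtractf sum_distrib_left mult_ac)
    thus ?thesis using perron_eigen[OF that] eigen[OF that] by (simp add: y_def algebra_simps)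
  qed
  moreover have "y k = 0" using k perron_vector_pos[OF k(1)] by (simp add: y_def)
  ultimately have "y i = 0" if "i < n" for i
    using nonneg_eigenvector_zero_propagation[of y k i] k that by blast
  thus ?thesis by (intro exI[of _ c]) (simp add: y_def)
qed
lemma perron_root_eigenvalue: "eigenvalue (map_mat complex_of_real A) (complex_of_real \<rho>)"
proof -
  define v where "v = vec n (\<lambda>i. complex_of_real (u i))"
  have "v \<noteq> 0\<^sub>v n"
  proof
    assume "v = 0\<^sub>v n"
    hence "v $ 0 = 0" using two_le_n by simp
    thus False using perron_vector_pos[of 0] two_le_n by (simp add: v_def)
  qed
  moreover have "map_mat complex_of_real A *\<^sub>v v = complex_of_real \<rho> \<cdot>\<^sub>v v"
  proof (rule eq_vecI)
    fix i assume "i < dim_vec (complex_of_real \<rho> \<cdot>\<^sub>v v)"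
    hence i: "i < n" by (simp add: v_def)
    have "(map_mat complex_of_real A *\<^sub>v v) $ i = (\<Sum>j<n. map_mat complex_of_real A $$ (i, j) * v $ j)"
      by (rule index_mult_mat_vec_sum[OF map_carrier_mat[THEN iffD2, OF A_carrier] _ i]) (simp add: v_def)
    also have "\<dots> = complex_of_real (\<Sum>j<n. a i j * u j)" using i A_carrier by (simp add: v_def)
    finally show "(map_mat complex_of_real A *\<^sub>v v) $ i = (complex_of_real \<rho> \<cdot>\<^sub>v v) $ i"
      using i by (simp add: perron_eigen v_def)
  qed (use A_carrier in \<open>simp add: v_def\<close>)
  ultimately show ?thesis
    unfolding eigenvalue_def eigenvector_def using A_carrier by (intro exI[of _ v]) (auto simp: v_def)
qed

lemma eigenvalue_norm_le_perron_root:
  assumes "eigenvalue (map_mat complex_of_real A) k"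
  shows "cmod k \<le> \<rho>"
proof -
  obtain v where v: "v \<in> carrier_vec n" "v \<noteq> 0\<^sub>v n" "map_mat complex_of_real A *\<^sub>v v = k \<cdot>\<^sub>v v"
    using assms A_carrier unfolding eigenvalue_def eigenvector_def by auto
  have coord: "cmod k * cmod (v $ i) \<le> (\<Sum>j<n. a i j * cmod (v $ j))" if i: "i < n" for i
  proof -
    have "k * v $ i = (map_mat complex_of_real A *\<^sub>v v) $ i" using v i by simp
    also have "\<dots> = (\<Sum>j<n. complex_of_real (a i j) * v $ j)"
      using i A_carrier by (simp add: index_mult_mat_vec_sum[OF map_carrier_mat[THEN iffD2, OF A_carrier] v(1) i])
    finally have "k * v $ i = (\<Sum>j<n. complex_of_real (a i j) * v $ j)" .
    hence "cmod k * cmod (v $ i) \<le> (\<Sum>j<n. cmod (complex_of_real (a i j) * v $ j))"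
      by (metis norm_mult norm_sum)
    also have "\<dots> = (\<Sum>j<n. a i j * cmod (v $ j))"
      using a_nonneg i by (intro sum.cong refl) (simp add: norm_mult)
    finally show ?thesis .
  qed
  define T where "T = (\<Sum>i<n. u i * cmod (v $ i))"
  have "cmod k * T = (\<Sum>i<n. u i * (cmod k * cmod (v $ i)))"
    by (simp add: T_def sum_distrib_left mult_ac)
  also have "\<dots> \<le> (\<Sum>i<n. u i * (\<Sum>j<n. a i j * cmod (v $ j)))"
    using coord perron_vector_nonneg by (intro sum_mono mult_left_mono) auto
  also have "\<dots> = \<rho> * T" unfolding T_def by (rule sum_perron_mult_adjacency)
  finally have le: "cmod k * T \<le> \<rho> * T" .
  obtain i where i: "i < n" "v $ i \<noteq> 0"
    using v(1,2) by (metis carrier_vecD eq_vecI index_zero_vec(1,2))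
  have "0 < u i * cmod (v $ i)" using perron_vector_pos[OF i(1)] i(2) by simp
  also have "\<dots> \<le> T" unfolding T_def
    using i perron_vector_nonneg by (intro member_le_sum) auto
  finally show ?thesis using le by simp
qed

lemma spec_rad_eq_perron_root: "spec_rad A = \<rho>"
proof -
  have A': "map_mat complex_of_real A \<in> carrier_mat n n" using A_carrier by simp
  have n: "n > 0" using two_le_n by simp
  obtain k where "eigenvalue (map_mat complex_of_real A) k"
      "spectral_radius (map_mat complex_of_real A) = cmod k"
    using spectral_radius_mem_max(1)[OF A' n] unfolding spectrum_def by auto
  hence "spectral_radius (map_mat complex_of_real A) \<le> \<rho>"
    by (simp add: eigenvalue_norm_le_perron_root)
  moreover have "\<rho> \<in> norm ` spectrum (map_mat complex_of_real A)"
    using perron_root_eigenvalue perron_root_pos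
    by (intro image_eqI[where x = "complex_of_real \<rho>"]) (auto simp: spectrum_def)
  hence "\<rho> \<le> spectral_radius (map_mat complex_of_real A)"
    by (rule spectral_radius_mem_max(2)[OF A' n])
  ultimately show ?thesis unfolding spec_rad_def by simp
qed

section \<open>Deflation and the walk resolvent\<close>

text \<open>The deflated matrix I - t (A - \<rho> u u^T) agrees with I - t A on the orthogonal complement
  of u and fixes u, so unlike I - t A it stays invertible at t = 1/\<rho>. Its inverse is taken through the
  adjugate, which makes the continuity in t evident.\<close>
definition deflated :: "real \<Rightarrow> real mat" where
  "deflated t = mat n n (\<lambda>(i, j). (if i = j then 1 else 0) - t * (a i j - \<rho> * u i * u j))"

definition deflated_inverse :: "real \<Rightarrow> real mat" where
  "deflated_inverse t = (1 / det (deflated t)) \<cdot>\<^sub>m adj_mat (deflated t)"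

lemma deflated_carrier: "deflated t \<in> carrier_mat n n"
  by (simp add: deflated_def)

lemma index_deflated:
  "i < n \<Longrightarrow> j < n \<Longrightarrow> deflated t $$ (i, j) = (if i = j then 1 else 0) - t * (a i j - \<rho> * u i * u j)"
  by (simp add: deflated_def)

lemma deflated_sym: "i < n \<Longrightarrow> j < n \<Longrightarrow> deflated t $$ (i, j) = deflated t $$ (j, i)"
  by (simp add: index_deflated a_sym)

lemma deflated_inverse_carrier: "deflated_inverse t \<in> carrier_mat n n"
  using adj_mat(1)[OF deflated_carrier] by (simp add: deflated_inverse_def)

lemma index_deflated_inverse:
  "i < n \<Longrightarrow> j < n \<Longrightarrow> deflated_inverse t $$ (i, j) = cofactor (deflated t) j i / det (deflated t)"
  using deflated_carrier[of t] by (simp add: deflated_inverse_def adj_mat_def)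

lemma deflated_mult_inverse:
  assumes "det (deflated t) \<noteq> 0"
  shows "deflated t * deflated_inverse t = 1\<^sub>m n"
proof -
  note adj = adj_mat[OF deflated_carrier, of t]
  have "deflated t * deflated_inverse t = (1 / det (deflated t)) \<cdot>\<^sub>m (det (deflated t) \<cdot>\<^sub>m 1\<^sub>m n)"
    unfolding deflated_inverse_def using mult_smult_distrib[OF deflated_carrier adj(1)] adj(2) by simp
  also have "\<dots> = 1\<^sub>m n" using assms by (intro eq_matI) auto
  finally show ?thesis .
qed

lemma sum_deflated_mult_inverse:
  assumes "det (deflated t) \<noteq> 0" "i < n" "j < n"
  shows "(\<Sum>k<n. deflated t $$ (i, k) * deflated_inverse t $$ (k, j)) = (if i = j then 1 else 0)"
  using index_mult_mat_sum[OF deflated_carrier deflated_inverse_carrier assms(2,3), of t t]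
    deflated_mult_inverse[OF assms(1)] assms(2,3) by simp

lemma deflated_perron: "i < n \<Longrightarrow> (\<Sum>k<n. deflated t $$ (i, k) * u k) = u i"
proof -
  assume i: "i < n"
  have "(\<Sum>k<n. deflated t $$ (i, k) * u k)
      = (\<Sum>k<n. (if i = k then 1 else 0) * u k - t * (a i k * u k) + t * \<rho> * u i * (u k)\<^sup>2)"
    by (intro sum.cong refl) (simp add: index_deflated i algebra_simps power2_eq_square)
  also have "\<dots> = u i - t * (\<Sum>k<n. a i k * u k) + t * \<rho> * u i * (\<Sum>k<n. (u k)\<^sup>2)"
    using i by (simp add: sum.distrib sum_subtractf sum_distrib_left sum_delta_mult)
  finally show ?thesis using perron_eigen[OF i] sum_perron_vector_square by simp
qed

lemma perron_deflated_inverse: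
  assumes det: "det (deflated t) \<noteq> 0" and j: "j < n"
  shows "(\<Sum>k<n. u k * deflated_inverse t $$ (k, j)) = u j"
proof -
  have "(\<Sum>k<n. u k * deflated_inverse t $$ (k, j))
      = (\<Sum>k<n. (\<Sum>l<n. deflated t $$ (k, l) * u l) * deflated_inverse t $$ (k, j))"
    by (intro sum.cong refl) (simp add: deflated_perron)
  also have "\<dots> = (\<Sum>k<n. \<Sum>l<n. u l * (deflated t $$ (l, k) * deflated_inverse t $$ (k, j)))"
    by (intro sum.cong refl) (simp add: sum_distrib_left sum_distrib_right deflated_sym mult_ac)
  also have "\<dots> = (\<Sum>l<n. u l * (\<Sum>k<n. deflated t $$ (l, k) * deflated_inverse t $$ (k, j)))"
    by (subst sum.swap) (simp add: sum_distrib_left)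
  also have "\<dots> = (\<Sum>l<n. (if j = l then 1 else 0) * u l)"
    by (intro sum.cong refl) (auto simp: sum_deflated_mult_inverse[OF det _ j])
  finally show ?thesis using j by (simp add: sum_delta_mult)
qed

lemma deflated_inverse_root_kernel:
  assumes kernel: "\<And>i. i < n \<Longrightarrow> (\<Sum>k<n. deflated (1 / \<rho>) $$ (i, k) * x k) = 0" and i: "i < n"
  shows "x i = 0"
proof -
  define c where "c = (\<Sum>k<n. u k * x k)"
  have eq: "x i - (\<Sum>k<n. a i k * x k) / \<rho> + u i * c = 0" if i: "i < n" for i
  proof -
    have "(\<Sum>k<n. deflated (1 / \<rho>) $$ (i, k) * x k)
        = (\<Sum>k<n. (if i = k then 1 else 0) * x k - a i k * x k / \<rho> + u i * (u k * x k))"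
      using perron_root_pos by (intro sum.cong refl) (simp add: index_deflated i field_simps)
    also have "\<dots> = x i - (\<Sum>k<n. a i k * x k) / \<rho> + u i * c"
      unfolding c_def using i
      by (simp add: sum.distrib sum_subtractf sum_distrib_left sum_delta_mult sum_divide_distrib)
    finally show ?thesis using kernel[OF i] by simp
  qed
  have "0 = (\<Sum>i<n. u i * (x i - (\<Sum>k<n. a i k * x k) / \<rho> + u i * c))"
    by (simp add: eq)
  also have "\<dots> = c - (\<Sum>i<n. u i * (\<Sum>k<n. a i k * x k)) / \<rho> + c * (\<Sum>i<n. (u i)\<^sup>2)"
    unfolding c_def
    by (simp add: sum.distrib sum_subtractf sum_distrib_left sum_divide_distrib algebra_simps power2_eq_square)
  also have "\<dots> = c"
    unfolding sum_perron_mult_adjacency sum_perron_vector_square c_def[symmetric]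
    using perron_root_pos by simp
  finally have c0: "c = 0" ..
  have "(\<Sum>k<n. a i k * x k) = \<rho> * x i" if "i < n" for i
    using eq[OF that] c0 perron_root_pos by (simp add: field_simps)
  then obtain m where m: "\<forall>i<n. x i = m * u i" using perron_eigenvector_multiple by blast
  have "c = (\<Sum>k<n. m * (u k)\<^sup>2)" unfolding c_def using m by (intro sum.cong) (auto simp: power2_eq_square)
  hence "c = m" by (simp add: sum_distrib_left[symmetric] sum_perron_vector_square)
  thus ?thesis using m c0 i by simp
qed

lemma det_deflated_inverse_root: "det (deflated (1 / \<rho>)) \<noteq> 0"
proof
  assume "det (deflated (1 / \<rho>)) = 0"
  then obtain v where v: "v \<in> carrier_vec n" "v \<noteq> 0\<^sub>v n" "deflated (1 / \<rho>) *\<^sub>v v = 0\<^sub>v n"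
    using det_0_iff_vec_prod_zero[OF deflated_carrier] by auto
  have "(\<Sum>k<n. deflated (1 / \<rho>) $$ (i, k) * v $ k) = 0" if "i < n" for i
    using v(3) index_mult_mat_vec_sum[OF deflated_carrier v(1) that] that by (metis index_zero_vec(1))
  hence "v $ i = 0" if "i < n" for i using deflated_inverse_root_kernel that by blast
  hence "v = 0\<^sub>v n" using v(1) by (intro eq_vecI) auto
  thus False using v(2) by simp
qed

text \<open>The identity t (1 + \<alpha> \<rho>) = \<alpha> makes the Perron components cancel.\<close>
lemma walk_resolvent_eq:
  assumes \<alpha>: "\<alpha> > 0" and det: "det (deflated (inverse (\<rho> + inverse \<alpha>))) \<noteq> 0"
  shows "walk_resolvent A \<alpha>
    = mat n n (\<lambda>(i, j). \<alpha> * \<rho> * u i * u j + deflated_inverse (inverse (\<rho> + inverse \<alpha>)) $$ (i, j))"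
    (is "_ = ?R")
proof -
  define t where "t = inverse (\<rho> + inverse \<alpha>)"
  let ?N = "deflated t" and ?X = "deflated_inverse t" and ?M = "1\<^sub>m n - t \<cdot>\<^sub>m A"
  have "1 + \<alpha> * \<rho> > 0" using \<alpha> perron_root_pos by (simp add: add_pos_pos)
  hence t: "t * \<rho> * (\<alpha> * \<rho>) = \<alpha> * \<rho> - t * \<rho>"
    using \<alpha> unfolding t_def by (simp add: field_simps power2_eq_square)
  have M: "?M \<in> carrier_mat n n" using A_carrier by (intro minus_carrier_mat smult_carrier_mat)
  have "?M * ?R = 1\<^sub>m n"
  proof (rule eq_matI)
    fix i j assume "i < dim_row (1\<^sub>m n)" "j < dim_col (1\<^sub>m n)"
    hence i: "i < n" and j: "j < n" by auto
    have "(?M * ?R) $$ (i, j)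
        = (\<Sum>k<n. (?N $$ (i, k) - t * \<rho> * u i * u k) * (\<alpha> * \<rho> * u k * u j + ?X $$ (k, j)))"
      unfolding index_mult_mat_sum[OF M mat_carrier i j] using A_carrier i j
      by (intro sum.cong refl) (simp add: index_deflated t_def algebra_simps)
    also have "\<dots> = \<alpha> * \<rho> * u j * (\<Sum>k<n. ?N $$ (i, k) * u k) + (\<Sum>k<n. ?N $$ (i, k) * ?X $$ (k, j))
        - t * \<rho> * (\<alpha> * \<rho>) * u i * u j * (\<Sum>k<n. (u k)\<^sup>2) - t * \<rho> * u i * (\<Sum>k<n. u k * ?X $$ (k, j))"
      by (simp add: algebra_simps power2_eq_square sum.distrib sum_subtractf sum_distrib_left)
    also have "\<dots> = (if i = j then 1 else 0) + u i * u j * (\<alpha> * \<rho> - t * \<rho> * (\<alpha> * \<rho>) - t * \<rho>)"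
      unfolding deflated_perron[OF i] sum_deflated_mult_inverse[OF det[folded t_def] i j]
        perron_deflated_inverse[OF det[folded t_def] j] sum_perron_vector_square
      by (simp add: algebra_simps)
    also have "\<dots> = 1\<^sub>m n $$ (i, j)" using i j t by simp
    finally show "(?M * ?R) $$ (i, j) = 1\<^sub>m n $$ (i, j)" .
  qed (use A_carrier in auto)
  hence "mat_inverse ?M = Some ?R" by (intro mat_inverse_eq_SomeI[OF M]) auto
  moreover have "dim_row A = n" using A_carrier by simp
  ultimately show ?thesis
    unfolding walk_resolvent_def Let_def spec_rad_eq_perron_root t_def by simp
qed

lemma tendsto_deflated_parameter: "((\<lambda>\<alpha>. inverse (\<rho> + inverse \<alpha>)) \<longlongrightarrow> 1 / \<rho>) at_top"
proof -
  have "((\<lambda>\<alpha>. inverse (\<rho> + inverse \<alpha>)) \<longlongrightarrow> inverse (\<rho> + 0)) at_top"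
    using perron_root_pos
    by (intro tendsto_inverse tendsto_add tendsto_const tendsto_inverse_0_at_top filterlim_ident) auto
  thus ?thesis by (simp add: divide_inverse)
qed

lemma tendsto_index_deflated:
  "i < n \<Longrightarrow> j < n \<Longrightarrow>
    ((\<lambda>\<alpha>. deflated (inverse (\<rho> + inverse \<alpha>)) $$ (i, j)) \<longlongrightarrow> deflated (1 / \<rho>) $$ (i, j)) at_top"
  unfolding index_deflated by (intro tendsto_intros tendsto_deflated_parameter)

lemma tendsto_det_deflated:
  "((\<lambda>\<alpha>. det (deflated (inverse (\<rho> + inverse \<alpha>)))) \<longlongrightarrow> det (deflated (1 / \<rho>))) at_top"
  by (rule tendsto_det[OF deflated_carrier deflated_carrier tendsto_index_deflated])

lemma eventually_det_deflated_nonzero: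
  "\<forall>\<^sub>F \<alpha> in at_top. det (deflated (inverse (\<rho> + inverse \<alpha>))) \<noteq> 0"
  by (rule tendsto_imp_eventually_ne[OF tendsto_det_deflated det_deflated_inverse_root])

lemma tendsto_index_deflated_inverse:
  "i < n \<Longrightarrow> j < n \<Longrightarrow>
    ((\<lambda>\<alpha>. deflated_inverse (inverse (\<rho> + inverse \<alpha>)) $$ (i, j)) \<longlongrightarrow> deflated_inverse (1 / \<rho>) $$ (i, j)) at_top"
  unfolding index_deflated_inverse
  by (intro tendsto_divide tendsto_cofactor[OF deflated_carrier deflated_carrier tendsto_index_deflated]
      tendsto_det_deflated det_deflated_inverse_root)

definition green :: "nat \<Rightarrow> nat \<Rightarrow> real" where
  "green i j = deflated_inverse (1 / \<rho>) $$ (i, j) / (u i * u j)"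

definition long_walk_dist :: "nat \<Rightarrow> nat \<Rightarrow> real" where
  "long_walk_dist i j = (green i i + green j j - 2 * green i j) / (real n * \<rho>)"

lemma tendsto_walk_dist:
  assumes i: "i < n" and j: "j < n"
  shows "((\<lambda>\<alpha>. walk_dist A \<alpha> i j) \<longlongrightarrow> long_walk_dist i j) at_top"
proof -
  let ?X = "\<lambda>\<alpha>. deflated_inverse (inverse (\<rho> + inverse \<alpha>))"
  have "((\<lambda>\<alpha>. walk_theta n \<alpha> * ((ln (\<alpha> * \<rho> * (u i)\<^sup>2 + ?X \<alpha> $$ (i, i))
            + ln (\<alpha> * \<rho> * (u j)\<^sup>2 + ?X \<alpha> $$ (j, j))) / 2 - ln (\<alpha> * \<rho> * (u i * u j) + ?X \<alpha> $$ (i, j))))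
        \<longlongrightarrow> 2 / (real n * \<rho>) * ((deflated_inverse (1 / \<rho>) $$ (i, i) / (u i)\<^sup>2
            + deflated_inverse (1 / \<rho>) $$ (j, j) / (u j)\<^sup>2) / 2
            - deflated_inverse (1 / \<rho>) $$ (i, j) / (u i * u j))) at_top"
    using two_le_n
    by (intro tendsto_walk_theta_ln_defect perron_root_pos perron_vector_pos i j
        tendsto_index_deflated_inverse) auto
  moreover have "2 / (real n * \<rho>) * ((deflated_inverse (1 / \<rho>) $$ (i, i) / (u i)\<^sup>2
            + deflated_inverse (1 / \<rho>) $$ (j, j) / (u j)\<^sup>2) / 2
            - deflated_inverse (1 / \<rho>) $$ (i, j) / (u i * u j)) = long_walk_dist i j"
    using perron_vector_pos[OF i] perron_vector_pos[OF j] perron_root_pos two_le_n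
    by (simp add: long_walk_dist_def green_def power2_eq_square field_simps)
  moreover have "\<forall>\<^sub>F \<alpha> in at_top. walk_theta n \<alpha> * ((ln (\<alpha> * \<rho> * (u i)\<^sup>2 + ?X \<alpha> $$ (i, i))
            + ln (\<alpha> * \<rho> * (u j)\<^sup>2 + ?X \<alpha> $$ (j, j))) / 2 - ln (\<alpha> * \<rho> * (u i * u j) + ?X \<alpha> $$ (i, j)))
      = walk_dist A \<alpha> i j"
    using eventually_det_deflated_nonzero eventually_gt_at_top[of 0]
  proof eventually_elim
    case (elim \<alpha>)
    have "dim_row A = n" using A_carrier by simp
    thus ?case using i j elim
      by (simp add: walk_dist_def walk_resolvent_eq power2_eq_square mult.assoc)
  qed
  ultimately show ?thesis by (simp add: Lim_transform_eventually)
qed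
section \<open>The Green function and the maximum principle\<close>

lemma green_sym: "i < n \<Longrightarrow> j < n \<Longrightarrow> green i j = green j i"
proof -
  assume ij: "i < n" "j < n"
  have "transpose_mat (deflated (1 / \<rho>)) = deflated (1 / \<rho>)"
    by (intro eq_matI) (auto simp: deflated_def a_sym)
  hence "transpose_mat (deflated_inverse (1 / \<rho>)) = deflated_inverse (1 / \<rho>)"
    by (rule transpose_right_inverse_of_symmetric[OF deflated_carrier deflated_inverse_carrier _
          deflated_mult_inverse[OF det_deflated_inverse_root]])
  hence "deflated_inverse (1 / \<rho>) $$ (j, i) = deflated_inverse (1 / \<rho>) $$ (i, j)"
    using ij deflated_inverse_carrier[of "1 / \<rho>"] by (metis carrier_matD index_transpose_mat(1))
  thus ?thesis by (simp add: green_def mult.commute)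
qed

text \<open>u l times the generator of the random walk with transition probabilities
  a l m u m / (\<rho> u l) (the Doob transform by the Perron vector).\<close>
definition perron_laplacian :: "(nat \<Rightarrow> real) \<Rightarrow> nat \<Rightarrow> real" where
  "perron_laplacian \<psi> l = u l * \<psi> l - (\<Sum>m<n. a l m * u m * \<psi> m) / \<rho>"

lemma perron_laplacian_eq:
  assumes l: "l < n"
  shows "perron_laplacian \<psi> l = (\<Sum>m<n. a l m * u m * (\<psi> l - \<psi> m)) / \<rho>"
proof -
  have "(\<Sum>m<n. a l m * u m * (\<psi> l - \<psi> m)) = \<psi> l * (\<Sum>m<n. a l m * u m) - (\<Sum>m<n. a l m * u m * \<psi> m)"
    by (simp add: algebra_simps sum_subtractf sum_distrib_left)
  thus ?thesis using perron_eigen[OF l] perron_root_pos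
    by (simp add: perron_laplacian_def diff_divide_distrib)
qed

lemma deflated_inverse_root_harmonic:
  assumes l: "l < n" and c: "c < n"
  shows "deflated_inverse (1 / \<rho>) $$ (l, c) - (\<Sum>m<n. a l m * deflated_inverse (1 / \<rho>) $$ (m, c)) / \<rho>
    = (if l = c then 1 else 0) - u l * u c"
proof -
  let ?X = "deflated_inverse (1 / \<rho>)"
  have "(if l = c then 1 else 0) = (\<Sum>m<n. deflated (1 / \<rho>) $$ (l, m) * ?X $$ (m, c))"
    using sum_deflated_mult_inverse[OF det_deflated_inverse_root l c] by simp
  also have "\<dots> = (\<Sum>m<n. (if l = m then 1 else 0) * ?X $$ (m, c) - a l m * ?X $$ (m, c) / \<rho>
      + u l * (u m * ?X $$ (m, c)))"
    using perron_root_pos by (intro sum.cong refl) (simp add: index_deflated l field_simps)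
  also have "\<dots> = ?X $$ (l, c) - (\<Sum>m<n. a l m * ?X $$ (m, c)) / \<rho> + u l * u c"
    using l perron_deflated_inverse[OF det_deflated_inverse_root c]
    by (simp add: sum.distrib sum_subtractf sum_distrib_left[symmetric] sum_divide_distrib sum_delta_mult)
  finally show ?thesis by simp
qed

lemma green_harmonic:
  assumes l: "l < n" and p: "p < n" and q: "q < n"
  shows "perron_laplacian (\<lambda>m. green m p - green m q) l
    = (if l = p then 1 / u p else 0) - (if l = q then 1 / u q else 0)"
proof -
  let ?X = "deflated_inverse (1 / \<rho>)"
  have up: "u p > 0" "u q > 0" using perron_vector_pos p q by auto
  have scaled: "u m * (green m p - green m q) = ?X $$ (m, p) / u p - ?X $$ (m, q) / u q" if "m < n" for m
    using perron_vector_pos[OF that] up by (simp add: green_def field_simps)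
  have "(\<Sum>m<n. a l m * u m * (green m p - green m q))
      = (\<Sum>m<n. a l m * ?X $$ (m, p) / u p - a l m * ?X $$ (m, q) / u q)"
    by (intro sum.cong refl) (simp only: mult.assoc scaled lessThan_iff, simp add: right_diff_distrib)
  hence "perron_laplacian (\<lambda>m. green m p - green m q) l
      = ?X $$ (l, p) / u p - ?X $$ (l, q) / u q
        - ((\<Sum>m<n. a l m * ?X $$ (m, p)) / u p - (\<Sum>m<n. a l m * ?X $$ (m, q)) / u q) / \<rho>"
    unfolding perron_laplacian_def scaled[OF l] by (simp add: sum_subtractf sum_divide_distrib)
  also have "\<dots> = (?X $$ (l, p) - (\<Sum>m<n. a l m * ?X $$ (m, p)) / \<rho>) / u p
        - (?X $$ (l, q) - (\<Sum>m<n. a l m * ?X $$ (m, q)) / \<rho>) / u q"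
    by (simp add: diff_divide_distrib mult.commute)
  also have "\<dots> = (if l = p then 1 / u p else 0) - (if l = q then 1 / u q else 0)"
    using up by (simp add: deflated_inverse_root_harmonic l p q diff_divide_distrib)
  finally show ?thesis .
qed

text \<open>At a maximum the Laplacian is a nonnegative combination of the differences to the neighbours,
  which therefore all vanish off p; connectivity carries the maximum to p.\<close>
lemma perron_laplacian_max_principle:
  assumes p: "p < n" and sub: "\<And>l. l < n \<Longrightarrow> l \<noteq> p \<Longrightarrow> perron_laplacian \<psi> l \<le> 0"
    and l: "l < n"
  shows "\<psi> l \<le> \<psi> p"
proof (rule ccontr)
  assume "\<not> \<psi> l \<le> \<psi> p"
  define M where "M = Max (\<psi> ` {..<n})"
  have fin: "finite (\<psi> ` {..<n})" "\<psi> ` {..<n} \<noteq> {}" using two_le_n by (auto simp: lessThan_empty_iff)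
  obtain k where k: "k < n" "\<psi> k = M" using Max_in[OF fin] unfolding M_def by auto
  have le_M: "\<psi> i \<le> M" if "i < n" for i unfolding M_def using fin that by (intro Max_ge) auto
  have pM: "\<psi> p < M" using \<open>\<not> \<psi> l \<le> \<psi> p\<close> le_M[OF l] by simp
  have "\<psi> m = M" if "(k, m) \<in> edges\<^sup>*" for m
    using that
  proof (induction rule: rtrancl_induct)
    case base thus ?case using k by simp
  next
    case (step l' m)
    hence lm: "l' < n" "m < n" "a l' m > 0" unfolding edges_def by auto
    have terms: "\<forall>r\<in>{..<n}. a l' r * u r * (\<psi> l' - \<psi> r) \<ge> 0"
      using a_nonneg lm perron_vector_nonneg le_M step.IH by auto
    have "(\<Sum>r<n. a l' r * u r * (\<psi> l' - \<psi> r)) / \<rho> \<le> 0"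
      using sub[OF lm(1)] step.IH pM unfolding perron_laplacian_eq[OF lm(1)] by auto
    hence "(\<Sum>r<n. a l' r * u r * (\<psi> l' - \<psi> r)) = 0"
      using perron_root_pos terms by (smt (verit) divide_pos_pos sum_nonneg)
    hence "a l' m * u m * (\<psi> l' - \<psi> m) = 0"
      using terms lm(2) by (subst (asm) sum_nonneg_eq_0_iff) auto
    thus ?case using lm(3) perron_vector_pos[OF lm(2)] step.IH by simp
  qed
  hence "\<psi> p = M" using in_rtrancl_edges[OF k(1) p] by blast
  thus False using pM by simp
qed

lemma green_diff_le: "p < n \<Longrightarrow> q < n \<Longrightarrow> l < n \<Longrightarrow> green l p - green l q \<le> green p p - green p q"
  by (rule perron_laplacian_max_principle[where \<psi> = "\<lambda>m. green m p - green m q"])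
    (auto simp: green_harmonic perron_vector_pos less_imp_le)

lemma long_walk_dist_pos:
  assumes i: "i < n" and j: "j < n" and "i \<noteq> j"
  shows "long_walk_dist i j > 0"
proof -
  define \<phi> where "\<phi> = (\<lambda>m. green m i - green m j)"
  have "green i i + green j j - 2 * green i j > 0"
  proof (rule ccontr)
    assume "\<not> green i i + green j j - 2 * green i j > 0"
    moreover have "\<phi> i - \<phi> j = green i i + green j j - 2 * green i j"
      using green_sym[OF i j] by (simp add: \<phi>_def)
    moreover have "\<phi> l \<le> \<phi> i" "\<phi> j \<le> \<phi> l" if "l < n" for l
      using green_diff_le[OF i j that] green_diff_le[OF j i that] by (auto simp: \<phi>_def)
    ultimately have "\<phi> l = \<phi> i" if "l < n" for l using that j by force
    hence "perron_laplacian \<phi> i = 0" by (simp add: perron_laplacian_eq[OF i])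
    moreover have "perron_laplacian \<phi> i = 1 / u i"
      using green_harmonic[OF i i j] \<open>i \<noteq> j\<close> by (simp add: \<phi>_def)
    ultimately show False using perron_vector_pos[OF i] by simp
  qed
  thus ?thesis using two_le_n perron_root_pos by (simp add: long_walk_dist_def)
qed

lemma long_walk_dist_triangle:
  assumes i: "i < n" and j: "j < n" and k: "k < n"
  shows "long_walk_dist i k \<le> long_walk_dist i j + long_walk_dist j k"
proof -
  have "green i i + green k k - 2 * green i k
      \<le> (green i i + green j j - 2 * green i j) + (green j j + green k k - 2 * green j k)"
    using green_diff_le[OF j i k] green_diff_le[OF j k i] green_sym i j k by fastforce
  thus ?thesis using two_le_n perron_root_pos
    by (simp add: long_walk_dist_def add_divide_distrib[symmetric] divide_right_mono)
qed

lemma long_walk_dist_metric: "metric_on {..<n} long_walk_dist"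
  unfolding metric_on_def
  using long_walk_dist_pos long_walk_dist_triangle green_sym
  by (auto simp: long_walk_dist_def algebra_simps)

end

theorem corollary4:
  fixes n :: nat and A :: "real mat"
  assumes "n \<ge> 2"
    and "weighted_adjacency n A"
    and "connected_graph n A"
  shows "\<exists>dLW :: nat \<Rightarrow> nat \<Rightarrow> real.
           (\<forall>i<n. \<forall>j<n. ((\<lambda>\<alpha>. walk_dist A \<alpha> i j) \<longlongrightarrow> dLW i j) at_top)
           \<and> metric_on {..<n} dLW"
proof -
  interpret connected_weighted_graph n A using assms by unfold_locales
  show ?thesis using tendsto_walk_dist long_walk_dist_metric by blast
qed

end
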